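(* Let $G$ be a finitely generated abelian group, written as $G=D\times\mathbb{Z}^n$ with $D$ finite and $n\geq1$. For $d\in\mathbb{N}$ let $a_d$ be the number of subgroups of index $d$ in $D$. Then for every $m\geq1$ the number of subgroups of index $m$ in $G$ equals $$\sum_{d_1\mid d_2\mid\cdots\mid d_n\mid m}a_{d_1}d_1d_2\cdots d_n,$$ the sum running over all chains of positive integers $d_1,\dots,d_n$ with $d_1\mid d_2$, \dots, $d_{n-1}\mid d_n$, $d_n\mid m$. *)

theory Defs
  imports "HOL-Algebra.Algebra"
begin

definition Zpow :: "nat \<Rightarrow> (nat \<Rightarrow> int) monoid" where
  "Zpow n = product_group {..<n} (\<lambda>_. integer_group)"

definition num_subgroups_of_index :: "('a, 'b) monoid_scheme \<Rightarrow> nat \<Rightarrow> nat" where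
  "num_subgroups_of_index G m = card {H. subgroup H G \<and> card (rcosets\<^bsub>G\<^esub> H) = m}"

end

theory Submission
  imports Defs
begin

text \<open>
  Let \<open>H\<close> be a subgroup of finite index in \<open>G \<times> \<int>\<close>, with \<open>G\<close> abelian.
  Then \<open>K = {g. (g, 0) \<in> H}\<close> is a subgroup of \<open>G\<close>, \<open>H\<close> contains elements
  \<open>(x, k)\<close> with \<open>k > 0\<close>, and for the least such \<open>k\<close> the group \<open>H\<close> is generated
  by \<open>K \<times> 0\<close> and \<open>(x, k)\<close>. Conversely, the subgroup generated by \<open>K \<times> 0\<close> and
  \<open>(x, k)\<close> has index \<open>[G : K] k\<close> and determines \<open>K\<close>, \<open>k\<close> and the coset \<open>K x\<close>.
  Counting these data gives
  \<open>a\<^sub>m(G \<times> \<int>) = \<Sum>\<^bsub>k | m\<^esub> (m / k) a\<^bsub>m / k\<^esub>(G) = \<Sum>\<^bsub>j | m\<^esub> j a\<^sub>j(G)\<close>.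
  Along \<open>D \<times> \<int>\<^sup>n\<^sup>+\<^sup>1 \<cong> (D \<times> \<int>\<^sup>n) \<times> \<int>\<close> this recursion unfolds into the
  sum over divisor chains.
\<close>

section \<open>Subgroups of finite index\<close>

definition subgroups_of_index :: "('a, 'b) monoid_scheme \<Rightarrow> nat \<Rightarrow> 'a set set" where
  "subgroups_of_index G m = {H. subgroup H G \<and> card (rcosets\<^bsub>G\<^esub> H) = m}"

lemma num_subgroups_of_index_eq_card: "num_subgroups_of_index G m = card (subgroups_of_index G m)"
  by (simp add: num_subgroups_of_index_def subgroups_of_index_def)

lemma card_image_eq_if_same_fibres:
  assumes "\<And>x y. x \<in> A \<Longrightarrow> y \<in> A \<Longrightarrow> f x = f y \<longleftrightarrow> g x = g y"
  shows "card (f ` A) = card (g ` A)"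
proof -
  let ?h = "\<lambda>u. g (inv_into A f u)"
  have h: "?h (f x) = g x" if "x \<in> A" for x
    using assms[OF inv_into_into[of "f x" f A] that] f_inv_into_f[of "f x" f A] that by simp
  then have "inj_on ?h (f ` A)"
    using assms by (auto intro!: inj_onI)
  moreover have "?h ` f ` A = g ` A"
    using h by (simp add: image_image)
  ultimately show ?thesis
    by (metis card_image)
qed

lemma rcosets_eq_image: "rcosets\<^bsub>G\<^esub> H = (\<lambda>x. H #>\<^bsub>G\<^esub> x) ` carrier G"
  by (auto simp: RCOSETS_def)

lemma (in group) rcos_eq_rcos_iff:
  assumes "subgroup H G" "x \<in> carrier G" "y \<in> carrier G"
  shows "H #> x = H #> y \<longleftrightarrow> x \<otimes> inv y \<in> H"
proof -
  have "x \<in> H #> y \<longleftrightarrow> x \<otimes> inv y \<in> H"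
    using assms subgroup.rcos_module[OF _ is_group] by blast
  then show ?thesis
    using assms rcos_self repr_independence by metis
qed

lemma int_pow_DirProd:
  assumes G: "group G" and H: "group H" and "a \<in> carrier G" "b \<in> carrier H"
  shows "(a, b) [^]\<^bsub>G \<times>\<times> H\<^esub> (q::int) = (a [^]\<^bsub>G\<^esub> q, b [^]\<^bsub>H\<^esub> q)"
proof -
  have ab: "(a, b) \<in> carrier (G \<times>\<times> H)"
    using assms by simp
  have "fst \<in> hom (G \<times>\<times> H) G" "snd \<in> hom (G \<times>\<times> H) H"
    by (auto intro: homI)
  from hom_int_pow[OF this(1) ab DirProd_group[OF G H] G] hom_int_pow[OF this(2) ab DirProd_group[OF G H] H]
  show ?thesis
    by (simp add: prod_eq_iff)
qed

lemma iso_card_rcosets_image: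
  assumes P: "group P" and Q: "group Q" and \<phi>: "\<phi> \<in> iso P Q" and H: "subgroup H P"
  shows "card (rcosets\<^bsub>Q\<^esub> (\<phi> ` H)) = card (rcosets\<^bsub>P\<^esub> H)"
proof -
  interpret group_hom P Q \<phi>
    using P Q \<phi> by (simp add: group_hom_def group_hom_axioms_def iso_def)
  have inj: "inj_on \<phi> (carrier P)" and surj: "\<phi> ` carrier P = carrier Q"
    using \<phi> by (auto simp: iso_def bij_betw_def)
  have "(\<phi> ` H) #>\<^bsub>Q\<^esub> \<phi> x = \<phi> ` (H #>\<^bsub>P\<^esub> x)" if "x \<in> carrier P" for x
    using that subgroup.subset[OF H] by (force simp: r_coset_def)
  then have "rcosets\<^bsub>Q\<^esub> (\<phi> ` H) = image \<phi> ` (rcosets\<^bsub>P\<^esub> H)"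
    unfolding rcosets_eq_image surj[symmetric] by (simp add: image_image)
  moreover have "inj_on (image \<phi>) (rcosets\<^bsub>P\<^esub> H)"
    using inj_on_image_Pow[OF inj] subgroup.rcosets_carrier[OF H P] by (blast intro: inj_on_subset)
  ultimately show ?thesis by (simp add: card_image)
qed

lemma iso_image_subgroups_of_index:
  assumes "group P" "group Q" "\<phi> \<in> iso P Q" "H \<in> subgroups_of_index P m"
  shows "\<phi> ` H \<in> subgroups_of_index Q m"
  using assms iso_card_rcosets_image[OF assms(1-3)] subgroup.iso_subgroup[OF _ assms(1-3)]
  by (simp add: subgroups_of_index_def)

lemma bij_betw_iso_subgroups_of_index:
  assumes P: "group P" and Q: "group Q" and \<phi>: "\<phi> \<in> iso P Q"
  shows "bij_betw (image \<phi>) (subgroups_of_index P m) (subgroups_of_index Q m)"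
proof (rule bij_betw_byWitness[where f' = "image (inv_into (carrier P) \<phi>)"])
  have \<psi>: "inv_into (carrier P) \<phi> \<in> iso Q P"
    using group.iso_set_sym[OF P \<phi>] .
  have inj: "inj_on \<phi> (carrier P)" and surj: "\<phi> ` carrier P = carrier Q"
    using \<phi> by (auto simp: iso_def bij_betw_def)
  show "\<forall>H \<in> subgroups_of_index P m. inv_into (carrier P) \<phi> ` \<phi> ` H = H"
    by (auto simp: subgroups_of_index_def inv_into_image_cancel[OF inj] subgroup.subset)
  show "\<forall>H \<in> subgroups_of_index Q m. \<phi> ` inv_into (carrier P) \<phi> ` H = H"
    by (auto simp: subgroups_of_index_def image_inv_into_cancel[OF surj] subgroup.subset)
  show "image \<phi> ` subgroups_of_index P m \<subseteq> subgroups_of_index Q m"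
    using iso_image_subgroups_of_index[OF P Q \<phi>] by (rule image_subsetI)
  show "image (inv_into (carrier P) \<phi>) ` subgroups_of_index Q m \<subseteq> subgroups_of_index P m"
    using iso_image_subgroups_of_index[OF Q P \<psi>] by (rule image_subsetI)
qed

lemma finite_subgroups_of_index:
  "finite (carrier G) \<Longrightarrow> finite (subgroups_of_index G m)"
  by (rule finite_subset[of _ "Pow (carrier G)"]) (auto simp: subgroups_of_index_def dest: subgroup.subset)

section \<open>Subgroups of finite index of \<open>G \<times> \<int>\<close>\<close>

lemma (in group) finite_index_subgroup_DirProd_integer_group_obtains_pos:
  assumes H: "subgroup H (G \<times>\<times> integer_group)"
    and fin: "finite (rcosets\<^bsub>G \<times>\<times> integer_group\<^esub> H)"
  obtains g and k :: nat where "k > 0" "(g, int k) \<in> H"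
proof -
  let ?P = "G \<times>\<times> integer_group"
  interpret P: group ?P
    by (simp add: DirProd_group is_group)
  interpret H: subgroup H ?P
    by (rule H)
  have "\<exists>g a. (g, a) \<in> H \<and> a \<noteq> 0"
  proof (rule ccontr)
    assume "\<not> (\<exists>g a. (g, a) \<in> H \<and> a \<noteq> 0)"
    then have "inj (\<lambda>a. H #>\<^bsub>?P\<^esub> (\<one>, a))"
      using P.rcos_eq_rcos_iff[OF H] by (intro injI) fastforce
    then have "infinite (range (\<lambda>a. H #>\<^bsub>?P\<^esub> (\<one>, a)))"
      using finite_imageD infinite_UNIV_int by blast
    moreover have "range (\<lambda>a. H #>\<^bsub>?P\<^esub> (\<one>, a)) \<subseteq> rcosets\<^bsub>?P\<^esub> H"
      by (auto intro!: P.rcosetsI[OF H.subset])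
    ultimately show False
      using fin finite_subset by blast
  qed
  then obtain g a where ga: "(g, a) \<in> H" "a \<noteq> 0"
    by blast
  have "g \<in> carrier G"
    using ga H.subset by auto
  then have "(inv g, - a) \<in> H"
    using H.m_inv_closed[OF ga(1)] by simp
  then show thesis
    using ga that[of "nat \<bar>a\<bar>"] by (cases "a > 0") simp_all
qed

text \<open>For \<open>k > 0\<close>, the subgroup of \<open>G \<times> \<int>\<close> generated by \<open>K \<times> 0\<close> and \<open>(x, k)\<close>.\<close>

definition lift_subgroup ::
    "('a, 'b) monoid_scheme \<Rightarrow> 'a set \<Rightarrow> nat \<Rightarrow> 'a \<Rightarrow> ('a \<times> int) set" where
  "lift_subgroup G K k x =
     {(g, a). g \<in> carrier G \<and> int k dvd a \<and>
        g \<otimes>\<^bsub>G\<^esub> inv\<^bsub>G\<^esub> (x [^]\<^bsub>G\<^esub> (a div int k)) \<in> K}"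

context comm_group
begin

lemma mem_lift_subgroup:
  assumes "k > 0"
  shows "(g, a) \<in> lift_subgroup G K k x \<longleftrightarrow>
    g \<in> carrier G \<and> (\<exists>q. a = int k * q \<and> g \<otimes> inv (x [^] q) \<in> K)"
  using assms by (auto simp: lift_subgroup_def)

lemma lift_subgroup_subgroup:
  assumes K: "subgroup K G" and k: "k > 0" and x: "x \<in> carrier G"
  shows "subgroup (lift_subgroup G K k x) (G \<times>\<times> integer_group)"
proof -
  interpret P: group "G \<times>\<times> integer_group"
    by (simp add: DirProd_group is_group)
  interpret K: subgroup K G
    by (rule K)
  show ?thesis
  proof (rule P.subgroupI)
    show "lift_subgroup G K k x \<subseteq> carrier (G \<times>\<times> integer_group)"
      by (auto simp: lift_subgroup_def)
    have "(\<one>, 0) \<in> lift_subgroup G K k x"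
      using x by (simp add: lift_subgroup_def)
    then show "lift_subgroup G K k x \<noteq> {}"
      by blast
  next
    fix p assume "p \<in> lift_subgroup G K k x"
    then obtain g q where p: "p = (g, int k * q)" "g \<in> carrier G" "g \<otimes> inv (x [^] q) \<in> K"
      using k by (cases p) (auto simp: mem_lift_subgroup)
    have "inv g \<otimes> inv (x [^] (- q)) = inv (g \<otimes> inv (x [^] q))"
      using p x by (simp add: int_pow_neg inv_mult)
    then have "(inv g, int k * (- q)) \<in> lift_subgroup G K k x"
      using p k by (auto simp: mem_lift_subgroup intro!: exI[of _ "- q"])
    then show "inv\<^bsub>G \<times>\<times> integer_group\<^esub> p \<in> lift_subgroup G K k x"
      using p by simp
  next
    fix p p' assume "p \<in> lift_subgroup G K k x" "p' \<in> lift_subgroup G K k x"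
    then obtain g q h r where p: "p = (g, int k * q)" "g \<in> carrier G" "g \<otimes> inv (x [^] q) \<in> K"
      and p': "p' = (h, int k * r)" "h \<in> carrier G" "h \<otimes> inv (x [^] r) \<in> K"
      using k by (cases p, cases p') (auto simp: mem_lift_subgroup)
    have "(g \<otimes> h) \<otimes> inv (x [^] (q + r)) = (g \<otimes> inv (x [^] q)) \<otimes> (h \<otimes> inv (x [^] r))"
      using p p' x by (simp add: int_pow_mult inv_mult m_ac)
    then have "(g \<otimes> h, int k * (q + r)) \<in> lift_subgroup G K k x"
      using p p' k by (auto simp: mem_lift_subgroup intro!: exI[of _ "q + r"])
    then show "p \<otimes>\<^bsub>G \<times>\<times> integer_group\<^esub> p' \<in> lift_subgroup G K k x"
      using p p' by (simp add: distrib_left)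
  qed
qed

lemma lift_subgroup_rcos_eq_iff:
  assumes K: "subgroup K G" and k: "k > 0" and x: "x \<in> carrier G"
    and g: "g \<in> carrier G" and h: "h \<in> carrier G"
  shows "lift_subgroup G K k x #>\<^bsub>G \<times>\<times> integer_group\<^esub> (g, a) =
           lift_subgroup G K k x #>\<^bsub>G \<times>\<times> integer_group\<^esub> (h, b) \<longleftrightarrow>
         K #> (g \<otimes> inv (x [^] (a div int k))) = K #> (h \<otimes> inv (x [^] (b div int k))) \<and>
           a mod int k = b mod int k"
proof -
  interpret P: group "G \<times>\<times> integer_group"
    by (simp add: DirProd_group is_group)
  let ?u = "g \<otimes> inv (x [^] (a div int k))" and ?v = "h \<otimes> inv (x [^] (b div int k))"
  have "lift_subgroup G K k x #>\<^bsub>G \<times>\<times> integer_group\<^esub> (g, a) =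
          lift_subgroup G K k x #>\<^bsub>G \<times>\<times> integer_group\<^esub> (h, b) \<longleftrightarrow>
        (g \<otimes> inv h, a - b) \<in> lift_subgroup G K k x"
    using P.rcos_eq_rcos_iff[OF lift_subgroup_subgroup[OF K k x]] g h by simp
  also have "\<dots> \<longleftrightarrow> ?u \<otimes> inv ?v \<in> K \<and> a mod int k = b mod int k"
  proof (cases "a mod int k = b mod int k")
    case True
    have "a - b = int k * (a div int k) - int k * (b div int k)"
      using True mult_div_mod_eq[of "int k" a] mult_div_mod_eq[of "int k" b] by linarith
    then have "a - b = int k * (a div int k - b div int k)"
      by (simp add: right_diff_distrib)
    then have "int k dvd (a - b)" "(a - b) div int k = a div int k - b div int k"
      using k by simp_all
    moreover have "(g \<otimes> inv h) \<otimes> inv (x [^] (a div int k - b div int k)) = ?u \<otimes> inv ?v"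
      using g h x by (simp add: int_pow_diff inv_mult m_ac)
    ultimately show ?thesis
      using True g h by (simp add: lift_subgroup_def)
  next
    case False
    then have "\<not> int k dvd (a - b)"
      by (simp add: mod_eq_dvd_iff)
    then show ?thesis
      using False by (simp add: lift_subgroup_def)
  qed
  also have "\<dots> \<longleftrightarrow> K #> ?u = K #> ?v \<and> a mod int k = b mod int k"
    using rcos_eq_rcos_iff[OF K] g h x by simp
  finally show ?thesis .
qed

lemma card_rcosets_lift_subgroup:
  assumes K: "subgroup K G" and k: "k > 0" and x: "x \<in> carrier G"
  shows "card (rcosets\<^bsub>G \<times>\<times> integer_group\<^esub> (lift_subgroup G K k x)) = card (rcosets K) * k"
proof -
  let ?P = "G \<times>\<times> integer_group" and ?L = "lift_subgroup G K k x"
  define \<phi> where "\<phi> p = (K #> (fst p \<otimes> inv (x [^] (snd p div int k))), snd p mod int k)" for p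
  have "card (rcosets\<^bsub>?P\<^esub> ?L) = card ((\<lambda>p. ?L #>\<^bsub>?P\<^esub> p) ` carrier ?P)"
    by (simp add: rcosets_eq_image)
  also have "\<dots> = card (\<phi> ` carrier ?P)"
  proof (rule card_image_eq_if_same_fibres)
    fix p p' assume "p \<in> carrier ?P" "p' \<in> carrier ?P"
    then show "(?L #>\<^bsub>?P\<^esub> p = ?L #>\<^bsub>?P\<^esub> p') \<longleftrightarrow> \<phi> p = \<phi> p'"
      by (cases p, cases p') (simp add: \<phi>_def lift_subgroup_rcos_eq_iff[OF K k x])
  qed
  also have "\<phi> ` carrier ?P = (rcosets K) \<times> {0..<int k}"
  proof
    show "\<phi> ` carrier ?P \<subseteq> (rcosets K) \<times> {0..<int k}"
      using k x subgroup.subset[OF K] by (auto simp: \<phi>_def intro!: rcosetsI)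
    show "(rcosets K) \<times> {0..<int k} \<subseteq> \<phi> ` carrier ?P"
    proof
      fix c assume "c \<in> (rcosets K) \<times> {0..<int k}"
      then obtain y r where "c = (K #> y, r)" "y \<in> carrier G" "0 \<le> r" "r < int k"
        by (auto simp: RCOSETS_def)
      then have "c = \<phi> (y, r)" "(y, r) \<in> carrier ?P"
        by (simp_all add: \<phi>_def)
      then show "c \<in> \<phi> ` carrier ?P"
        by blast
    qed
  qed
  finally show ?thesis
    by (simp add: card_cartesian_product)
qed

lemma lift_subgroup_zero_iff:
  assumes "subgroup K G" "x \<in> carrier G"
  shows "(g, 0) \<in> lift_subgroup G K k x \<longleftrightarrow> g \<in> K"
  using assms subgroup.subset by (fastforce simp: lift_subgroup_def)

lemma self_in_lift_subgroup:
  assumes "subgroup K G" "k > 0" "x \<in> carrier G"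
  shows "(x, int k) \<in> lift_subgroup G K k x"
  using assms subgroup.one_closed by (fastforce simp: lift_subgroup_def)

lemma lift_subgroup_rcos_cong:
  assumes K: "subgroup K G" and k: "k > 0" and x: "x \<in> carrier G" and y: "y \<in> carrier G"
    and xy: "K #> x = K #> y"
  shows "lift_subgroup G K k x = lift_subgroup G K k y"
proof -
  have sub: "lift_subgroup G K k x \<subseteq> lift_subgroup G K k y"
    if x: "x \<in> carrier G" and y: "y \<in> carrier G" and xy: "K #> x = K #> y" for x y
  proof
    fix p assume "p \<in> lift_subgroup G K k x"
    then obtain g q where p: "p = (g, int k * q)" "g \<in> carrier G" "g \<otimes> inv (x [^] q) \<in> K"
      using k by (cases p) (auto simp: mem_lift_subgroup)
    have "inv (y \<otimes> inv x) [^] q \<in> K"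
      using K x y xy rcos_eq_rcos_iff[OF K y x]
      by (simp add: subgroup_int_pow_closed subgroup.m_inv_closed)
    moreover have "g \<otimes> inv (y [^] q) = (g \<otimes> inv (x [^] q)) \<otimes> (inv (y \<otimes> inv x) [^] q)"
      using x y p by (simp add: int_pow_distrib int_pow_inv inv_mult_group inv_solve_left m_assoc)
    ultimately have "g \<otimes> inv (y [^] q) \<in> K"
      using p subgroup.m_closed[OF K] by metis
    then show "p \<in> lift_subgroup G K k y"
      using p k by (auto simp: mem_lift_subgroup)
  qed
  show ?thesis
    using sub[OF x y xy] sub[OF y x xy[symmetric]] by blast
qed

lemma lift_subgroup_eq_iff:
  assumes K: "subgroup K G" and K': "subgroup K' G" and k: "k > 0" and k': "k' > 0"
    and x: "x \<in> carrier G" and y: "y \<in> carrier G"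
  shows "lift_subgroup G K k x = lift_subgroup G K' k' y \<longleftrightarrow> K = K' \<and> k = k' \<and> K #> x = K #> y"
proof
  assume eq: "lift_subgroup G K k x = lift_subgroup G K' k' y"
  show "K = K' \<and> k = k' \<and> K #> x = K #> y"
  proof (intro conjI)
    show "K = K'"
      using eq lift_subgroup_zero_iff[OF K x] lift_subgroup_zero_iff[OF K' y] by blast
    have "(x, int k) \<in> lift_subgroup G K' k' y" "(y, int k') \<in> lift_subgroup G K k x"
      using eq self_in_lift_subgroup[OF K k x] self_in_lift_subgroup[OF K' k' y] by simp_all
    then have "int k' dvd int k" "int k dvd int k'"
      by (simp_all add: lift_subgroup_def)
    then show "k = k'"
      by (simp add: dvd_antisym)
    then have "(x, int k) \<in> lift_subgroup G K k y"
      using eq self_in_lift_subgroup[OF K k x] \<open>K = K'\<close> by simp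
    then have "x \<otimes> inv y \<in> K"
      using k y by (simp add: lift_subgroup_def)
    then show "K #> x = K #> y"
      using rcos_eq_rcos_iff[OF K x y] by simp
  qed
next
  assume "K = K' \<and> k = k' \<and> K #> x = K #> y"
  then show "lift_subgroup G K k x = lift_subgroup G K' k' y"
    using lift_subgroup_rcos_cong[OF K k x y] by auto
qed

lemma subgroup_DirProd_integer_group_zero_slice:
  assumes H: "subgroup H (G \<times>\<times> integer_group)"
  shows "subgroup {g \<in> carrier G. (g, 0) \<in> H} G"
proof -
  interpret H: subgroup H "G \<times>\<times> integer_group"
    by (rule H)
  show ?thesis
  proof (rule subgroupI)
    show "{g \<in> carrier G. (g, 0) \<in> H} \<noteq> {}"
      using H.one_closed by auto
    fix g h assume "g \<in> {g \<in> carrier G. (g, 0) \<in> H}" "h \<in> {g \<in> carrier G. (g, 0) \<in> H}"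
    then show "inv g \<in> {g \<in> carrier G. (g, 0) \<in> H}" "g \<otimes> h \<in> {g \<in> carrier G. (g, 0) \<in> H}"
      using H.m_inv_closed[of "(g, 0)"] H.m_closed[of "(g, 0)" "(h, 0)"] by auto
  qed auto
qed

lemma subgroup_DirProd_integer_group_eq_lift_subgroup_least:
  assumes H: "subgroup H (G \<times>\<times> integer_group)"
    and k: "k > 0" and xk: "(x, int k) \<in> H"
    and k_min: "\<And>g j. 0 < j \<Longrightarrow> (g, int j) \<in> H \<Longrightarrow> k \<le> j"
  shows "H = lift_subgroup G {g \<in> carrier G. (g, 0) \<in> H} k x"
proof
  let ?P = "G \<times>\<times> integer_group" and ?K = "{g \<in> carrier G. (g, 0) \<in> H}"
  interpret P: group ?P
    by (simp add: DirProd_group is_group)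
  interpret H: subgroup H ?P
    by (rule H)
  have x: "x \<in> carrier G"
    using xk H.subset by auto
  have pow: "(x [^] q, int k * q) \<in> H" for q :: int
    using P.subgroup_int_pow_closed[OF H xk, of q] int_pow_DirProd[OF is_group group_integer_group x]
    by (simp add: mult.commute)
  show "H \<subseteq> lift_subgroup G ?K k x"
  proof
    fix p assume p: "p \<in> H"
    then obtain g a where ga: "p = (g, a)" "g \<in> carrier G"
      using H.subset by auto
    define q where "q = a div int k"
    define r where "r = a mod int k"
    have "(g, a) \<otimes>\<^bsub>?P\<^esub> inv\<^bsub>?P\<^esub> (x [^] q, int k * q) \<in> H"
      using p ga pow by (simp add: H.m_closed H.m_inv_closed)
    then have gr: "(g \<otimes> inv (x [^] q), r) \<in> H"
      using x ga by (simp add: q_def r_def minus_mult_div_eq_mod)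
    have r: "0 \<le> r" "r < int k"
      using k by (simp_all add: r_def)
    have "r = 0"
    proof (rule ccontr)
      assume "r \<noteq> 0"
      then have "k \<le> nat r"
        using k_min[of "nat r"] gr r by simp
      then show False
        using r by linarith
    qed
    then show "p \<in> lift_subgroup G ?K k x"
      using gr ga x by (simp add: lift_subgroup_def q_def r_def mod_eq_0_iff_dvd)
  qed
  show "lift_subgroup G ?K k x \<subseteq> H"
  proof
    fix p assume "p \<in> lift_subgroup G ?K k x"
    then obtain g q where p: "p = (g, int k * q)" "g \<in> carrier G" "(g \<otimes> inv (x [^] q), 0) \<in> H"
      using k by (cases p) (auto simp: mem_lift_subgroup)
    have "(g \<otimes> inv (x [^] q), 0) \<otimes>\<^bsub>?P\<^esub> (x [^] q, int k * q) \<in> H"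
      using p(3) pow by (rule H.m_closed)
    then show "p \<in> H"
      using p x by (simp add: m_assoc)
  qed
qed

lemma subgroup_DirProd_integer_group_eq_lift_subgroup:
  assumes H: "subgroup H (G \<times>\<times> integer_group)"
    and fin: "finite (rcosets\<^bsub>G \<times>\<times> integer_group\<^esub> H)"
  obtains K k x where "subgroup K G" "k > 0" "x \<in> carrier G" "H = lift_subgroup G K k x"
proof -
  define k where "k = (LEAST k. 0 < k \<and> (\<exists>g. (g, int k) \<in> H))"
  obtain g0 k0 where "k0 > 0" "(g0, int k0) \<in> H"
    by (rule finite_index_subgroup_DirProd_integer_group_obtains_pos[OF H fin])
  then have "\<exists>k. 0 < k \<and> (\<exists>g. (g, int k) \<in> H)"
    by blast
  then obtain x where k: "k > 0" and xk: "(x, int k) \<in> H"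
    using LeastI_ex[of "\<lambda>k. 0 < k \<and> (\<exists>g. (g, int k) \<in> H)"] unfolding k_def by blast
  have "k \<le> j" if "0 < j" "(g, int j) \<in> H" for g j
    unfolding k_def by (rule Least_le) (use that in blast)
  then have "H = lift_subgroup G {g \<in> carrier G. (g, 0) \<in> H} k x"
    by (rule subgroup_DirProd_integer_group_eq_lift_subgroup_least[OF H k xk])
  moreover have "x \<in> carrier G"
    using xk subgroup.subset[OF H] by auto
  ultimately show thesis
    using that[OF subgroup_DirProd_integer_group_zero_slice[OF H] k] by blast
qed

lemma card_lift_subgroup_image:
  assumes K: "subgroup K G" and k: "k > 0"
  shows "card ((\<lambda>x. lift_subgroup G K k x) ` carrier G) = card (rcosets K)"
  unfolding rcosets_eq_image
  by (rule card_image_eq_if_same_fibres) (simp add: lift_subgroup_eq_iff[OF K K k k])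

lemma disjoint_lift_subgroup_images:
  assumes "subgroup K G" "subgroup K' G" "k > 0" "k' > 0" "(k, K) \<noteq> (k', K')"
  shows "(\<lambda>x. lift_subgroup G K k x) ` carrier G \<inter> (\<lambda>x. lift_subgroup G K' k' x) ` carrier G = {}"
  using lift_subgroup_eq_iff[OF assms(1-4)] assms(5) by blast

lemma subgroups_of_index_DirProd_integer_group:
  assumes m: "m > 0"
  shows "subgroups_of_index (G \<times>\<times> integer_group) m =
    (\<Union>(k, K) \<in> (SIGMA k:{k. k dvd m}. subgroups_of_index G (m div k)).
       (\<lambda>x. lift_subgroup G K k x) ` carrier G)"
proof (intro equalityI subsetI)
  fix H assume "H \<in> subgroups_of_index (G \<times>\<times> integer_group) m"
  then have H: "subgroup H (G \<times>\<times> integer_group)"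
    and index: "card (rcosets\<^bsub>G \<times>\<times> integer_group\<^esub> H) = m"
    by (auto simp: subgroups_of_index_def)
  then have "finite (rcosets\<^bsub>G \<times>\<times> integer_group\<^esub> H)"
    using m card_ge_0_finite by blast
  then obtain K k x where K: "subgroup K G" and k: "k > 0" and x: "x \<in> carrier G"
    and Hx: "H = lift_subgroup G K k x"
    using subgroup_DirProd_integer_group_eq_lift_subgroup[OF H] by blast
  have "m = card (rcosets K) * k"
    using index card_rcosets_lift_subgroup[OF K k x] Hx by simp
  then have "k dvd m" "card (rcosets K) = m div k"
    using k by simp_all
  then show "H \<in> (\<Union>(k, K) \<in> (SIGMA k:{k. k dvd m}. subgroups_of_index G (m div k)).
       (\<lambda>x. lift_subgroup G K k x) ` carrier G)"
    using K x Hx by (auto simp: subgroups_of_index_def)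
next
  fix H assume "H \<in> (\<Union>(k, K) \<in> (SIGMA k:{k. k dvd m}. subgroups_of_index G (m div k)).
       (\<lambda>x. lift_subgroup G K k x) ` carrier G)"
  then obtain k K x where k: "k dvd m" and K: "subgroup K G" "card (rcosets K) = m div k"
    and x: "x \<in> carrier G" and Hx: "H = lift_subgroup G K k x"
    by (auto simp: subgroups_of_index_def)
  have "k > 0"
    using k m by (auto intro: Nat.gr0I)
  then show "H \<in> subgroups_of_index (G \<times>\<times> integer_group) m"
    using lift_subgroup_subgroup[OF K(1) _ x] card_rcosets_lift_subgroup[OF K(1) _ x] K(2) k Hx
    by (simp add: subgroups_of_index_def)
qed

lemma
  assumes m: "m > 0" and fin: "\<And>j. j dvd m \<Longrightarrow> finite (subgroups_of_index G j)"
  shows finite_subgroups_of_index_DirProd_integer_group: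
      "finite (subgroups_of_index (G \<times>\<times> integer_group) m)"
    and card_subgroups_of_index_DirProd_integer_group:
      "card (subgroups_of_index (G \<times>\<times> integer_group) m) =
         (\<Sum>j | j dvd m. j * card (subgroups_of_index G j))"
proof -
  let ?S = "SIGMA k:{k. k dvd m}. subgroups_of_index G (m div k)"
  let ?A = "\<lambda>(k, K). (\<lambda>x. lift_subgroup G K k x) ` carrier G"
  have eq: "subgroups_of_index (G \<times>\<times> integer_group) m = \<Union> (?A ` ?S)"
    using subgroups_of_index_DirProd_integer_group[OF m] by (simp add: case_prod_beta)
  have S: "finite ?S"
    using m by (intro finite_SigmaI fin) (auto elim!: dvdE)
  have A: "finite (?A u) \<and> card (?A u) = m div fst u" if u_S: "u \<in> ?S" for u
  proof -
    obtain k K where u: "u = (k, K)" "k dvd m" "subgroup K G" "card (rcosets K) = m div k"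
      using u_S by (auto simp: subgroups_of_index_def)
    then have "k > 0" "m div k > 0"
      using m by (auto intro: Nat.gr0I elim: dvdE)
    moreover have "card ((\<lambda>x. lift_subgroup G K k x) ` carrier G) = m div k"
      using card_lift_subgroup_image[OF u(3) \<open>k > 0\<close>] u(4) by simp
    ultimately show ?thesis
      using u(1) card_ge_0_finite[of "(\<lambda>x. lift_subgroup G K k x) ` carrier G"] by simp
  qed
  have disj: "?A u \<inter> ?A v = {}" if uv_S: "u \<in> ?S" "v \<in> ?S" and "u \<noteq> v" for u v
  proof -
    obtain k K k' K' where uv: "u = (k, K)" "v = (k', K')" "k dvd m" "k' dvd m"
      and K: "subgroup K G" "subgroup K' G"
      using uv_S by (auto simp: subgroups_of_index_def)
    moreover have "k > 0" "k' > 0"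
      using uv m by (auto intro: Nat.gr0I)
    ultimately show ?thesis
      using disjoint_lift_subgroup_images[of K K' k k'] \<open>u \<noteq> v\<close> by simp
  qed
  show "finite (subgroups_of_index (G \<times>\<times> integer_group) m)"
    unfolding eq using S A by blast
  have "card (subgroups_of_index (G \<times>\<times> integer_group) m) = (\<Sum>u\<in>?S. card (?A u))"
    unfolding eq using S A disj by (intro card_UN_disjoint) auto
  also have "\<dots> = (\<Sum>u\<in>?S. m div fst u)"
    using A by (intro sum.cong) auto
  also have "\<dots> = (\<Sum>k | k dvd m. \<Sum>K \<in> subgroups_of_index G (m div k). m div k)"
    using m by (subst sum.Sigma) (auto intro: fin elim!: dvdE simp: case_prod_beta)
  also have "\<dots> = (\<Sum>k | k dvd m. (m div k) * card (subgroups_of_index G (m div k)))"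
    by (simp add: mult.commute)
  also have "\<dots> = (\<Sum>j | j dvd m. j * card (subgroups_of_index G j))"
    using m by (intro sum.reindex_bij_witness[of _ "(div) m" "(div) m"]) (auto elim: dvdE)
  finally show "card (subgroups_of_index (G \<times>\<times> integer_group) m) =
      (\<Sum>j | j dvd m. j * card (subgroups_of_index G j))" .
qed

end

section \<open>Chains of divisors\<close>

text \<open>
  The chain \<open>d\<^sub>1 | \<dots> | d\<^sub>n | m\<close> is stored as \<open>d 0, \<dots>, d (n - 1)\<close>. For \<open>n = 0\<close>
  the set is not the singleton of the empty chain (its last condition reads \<open>d 0 dvd m\<close>),
  so the recursion \<open>chain_sum_Suc\<close> starts at \<open>n = 1\<close>.
\<close>

definition divisor_chains :: "nat \<Rightarrow> nat \<Rightarrow> (nat \<Rightarrow> nat) set" where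
  "divisor_chains n m = {d \<in> {..<n} \<rightarrow>\<^sub>E {1..m}.
     (\<forall>i. Suc i < n \<longrightarrow> d i dvd d (Suc i)) \<and> d (n - 1) dvd m}"

definition chain_sum :: "(nat \<Rightarrow> nat) \<Rightarrow> nat \<Rightarrow> nat \<Rightarrow> nat" where
  "chain_sum a n m = (\<Sum>d \<in> divisor_chains n m. a (d 0) * (\<Prod>i<n. d i))"

lemma finite_divisor_chains: "finite (divisor_chains n m)"
  unfolding divisor_chains_def
  by (rule finite_subset[of _ "{..<n} \<rightarrow>\<^sub>E {1..m}"]) (auto intro: finite_PiE)

lemma dvd_chain_dvd:
  fixes d :: "nat \<Rightarrow> 'a::comm_monoid_mult"
  assumes "\<And>i. Suc i < n \<Longrightarrow> d i dvd d (Suc i)" "i \<le> j" "j < n"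
  shows "d i dvd d j"
  using assms(2,3)
proof (induction j)
  case (Suc j)
  then show ?case
    using assms(1)[of j] by (cases "i = Suc j") (auto intro: dvd_trans)
qed simp

lemma chain_sum_1:
  assumes "m > 0"
  shows "chain_sum a 1 m = (\<Sum>j | j dvd m. j * a j)"
  unfolding chain_sum_def
proof (rule sum.reindex_bij_witness[where j = "\<lambda>d. d 0" and i = "\<lambda>j. (\<lambda>_. undefined)(0 := j)"])
  fix d assume "d \<in> divisor_chains 1 m"
  then show "(\<lambda>_. undefined)(0 := d 0) = d" "d 0 \<in> {j. j dvd m}"
    by (auto simp: divisor_chains_def fun_eq_iff PiE_def extensional_def)
qed (use assms in \<open>auto simp: divisor_chains_def PiE_def extensional_def intro: Suc_leI Nat.gr0I dest: dvd_imp_le\<close>)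

lemma divisor_chains_fun_upd:
  assumes n: "n \<ge> 1" and e: "e \<in> divisor_chains n j" and j: "j dvd m" and m: "m > 0"
  shows "e(n := j) \<in> divisor_chains (Suc n) m"
proof -
  have "0 < j" "j \<le> m"
    using j m by (auto intro: dvd_pos_nat dvd_imp_le)
  moreover have "e \<in> {..<n} \<rightarrow>\<^sub>E {1..j}"
    using e by (simp add: divisor_chains_def)
  ultimately have "e(n := j) \<in> {..<Suc n} \<rightarrow>\<^sub>E {1..m}"
    unfolding lessThan_Suc by (intro PiE_fun_upd) (force simp: PiE_iff)+
  moreover have "(e(n := j)) i dvd (e(n := j)) (Suc i)" if "Suc i < Suc n" for i
    using e n that by (cases "Suc i = n") (auto simp: divisor_chains_def)
  ultimately show ?thesis
    using j by (simp add: divisor_chains_def)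
qed

lemma divisor_chains_restrict:
  assumes n: "n \<ge> 1" and d: "d \<in> divisor_chains (Suc n) m"
  shows "restrict d {..<n} \<in> divisor_chains n (d n)" "d n dvd m"
proof -
  have chain: "\<And>i. Suc i < Suc n \<Longrightarrow> d i dvd d (Suc i)"
    and range: "\<And>i. i \<le> n \<Longrightarrow> d i \<in> {1..m}"
    using d by (auto simp: divisor_chains_def)
  have "d i \<le> d n" if "i < n" for i
    using dvd_chain_dvd[of "Suc n" d i n, OF chain] range[of n] that by (auto intro: dvd_imp_le)
  then have "restrict d {..<n} \<in> {..<n} \<rightarrow>\<^sub>E {1..d n}"
    using range by auto
  moreover have "d (n - 1) dvd d n"
    using chain[of "n - 1"] n by simp
  ultimately show "restrict d {..<n} \<in> divisor_chains n (d n)"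
    using chain n by (simp add: divisor_chains_def)
  show "d n dvd m"
    using d by (simp add: divisor_chains_def)
qed

lemma bij_betw_divisor_chains_Suc:
  assumes "n \<ge> 1" "m > 0"
  shows "bij_betw (\<lambda>(j, e). e(n := j))
    (SIGMA j:{j. j dvd m}. divisor_chains n j) (divisor_chains (Suc n) m)"
proof (rule bij_betw_byWitness[where f' = "\<lambda>d. (d n, restrict d {..<n})"])
  let ?S = "SIGMA j:{j. j dvd m}. divisor_chains n j"
  show "\<forall>u \<in> ?S. (\<lambda>d. (d n, restrict d {..<n})) ((\<lambda>(j, e). e(n := j)) u) = u"
    by (auto simp: divisor_chains_def PiE_def extensional_restrict)
  show "\<forall>d \<in> divisor_chains (Suc n) m. (\<lambda>(j, e). e(n := j)) (d n, restrict d {..<n}) = d"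
    by (auto simp: divisor_chains_def PiE_def extensional_restrict simp flip: lessThan_Suc)
  show "(\<lambda>(j, e). e(n := j)) ` ?S \<subseteq> divisor_chains (Suc n) m"
    using divisor_chains_fun_upd assms by auto
  show "(\<lambda>d. (d n, restrict d {..<n})) ` divisor_chains (Suc n) m \<subseteq> ?S"
    using divisor_chains_restrict assms by auto
qed

lemma chain_sum_Suc:
  assumes "n \<ge> 1" "m > 0"
  shows "chain_sum a (Suc n) m = (\<Sum>j | j dvd m. j * chain_sum a n j)"
proof -
  have "(\<Sum>j | j dvd m. j * chain_sum a n j) =
      (\<Sum>(j, e) \<in> (SIGMA j:{j. j dvd m}. divisor_chains n j). j * (a (e 0) * (\<Prod>i<n. e i)))"
    using assms by (simp add: chain_sum_def sum_distrib_left sum.Sigma finite_divisor_chains)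
  also have "\<dots> = (\<Sum>(j, e) \<in> (SIGMA j:{j. j dvd m}. divisor_chains n j).
      a ((e(n := j)) 0) * (\<Prod>i<Suc n. (e(n := j)) i))"
    using assms by (intro sum.cong) (auto simp: divisor_chains_def PiE_def)
  also have "\<dots> = chain_sum a (Suc n) m"
    unfolding chain_sum_def case_prod_beta
    by (rule sum.reindex_bij_betw[OF bij_betw_divisor_chains_Suc[OF assms], unfolded case_prod_beta])
  finally show ?thesis
    by simp
qed

section \<open>The groups \<open>D \<times> \<int>\<^sup>n\<close>\<close>

lemma comm_group_DirProd:
  assumes "comm_group G" "comm_group H"
  shows "comm_group (G \<times>\<times> H)"
  using assms
  by (intro group.group_comm_groupI DirProd_group) (auto simp: comm_group_def comm_monoid.m_comm)

lemma group_Zpow: "group (Zpow n)"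
  by (simp add: Zpow_def)

lemma comm_group_Zpow: "comm_group (Zpow n)"
  unfolding Zpow_def by (rule group.group_comm_groupI) (auto simp: add.commute)

lemma iso_DirProd_Zpow_0: "(\<lambda>d. (d, \<lambda>_. undefined)) \<in> iso D (D \<times>\<times> Zpow 0)"
proof (rule group_isomorphisms_imp_iso)
  show "group_isomorphisms D (D \<times>\<times> Zpow 0) (\<lambda>d. (d, \<lambda>_. undefined)) fst"
    by (auto simp: group_isomorphisms_def hom_def Zpow_def)
qed

lemma fun_upd_in_extensional_lessThan_Suc:
  fixes n :: nat
  shows "f \<in> extensional {..<n} \<Longrightarrow> f(n := a) \<in> extensional {..<Suc n}"
  by (auto simp: extensional_def)

lemma iso_DirProd_Zpow_Suc:
  "(\<lambda>((d, f), a). (d, f(n := a)))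
     \<in> iso ((D \<times>\<times> Zpow n) \<times>\<times> integer_group) (D \<times>\<times> Zpow (Suc n))"
proof (rule group_isomorphisms_imp_iso)
  let ?P = "(D \<times>\<times> Zpow n) \<times>\<times> integer_group" and ?Q = "D \<times>\<times> Zpow (Suc n)"
  let ?\<phi> = "\<lambda>((d, f), a). (d, f(n := a))" and ?\<psi> = "\<lambda>(d, f). ((d, restrict f {..<n}), f n)"
  have carrier: "carrier (Zpow k) = extensional {..<k}" for k
    by (simp add: Zpow_def PiE_def)
  have mult: "f \<otimes>\<^bsub>Zpow k\<^esub> g = (\<lambda>i\<in>{..<k}. f i + g i)" for k f g
    by (simp add: Zpow_def)
  have "?\<phi> \<in> hom ?P ?Q"
  proof (rule homI)
    fix x y assume "x \<in> carrier ?P" "y \<in> carrier ?P"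
    then show "?\<phi> (x \<otimes>\<^bsub>?P\<^esub> y) = ?\<phi> x \<otimes>\<^bsub>?Q\<^esub> ?\<phi> y"
      by (auto simp: mult fun_eq_iff less_Suc_eq)
  qed (auto simp: carrier fun_upd_in_extensional_lessThan_Suc)
  moreover have "?\<psi> \<in> hom ?Q ?P"
    by (rule homI) (auto simp: carrier mult fun_eq_iff)
  ultimately show "group_isomorphisms ?P ?Q ?\<phi> ?\<psi>"
    by (auto simp: group_isomorphisms_def carrier extensional_restrict simp flip: lessThan_Suc)
qed

lemma card_subgroups_of_index_DirProd_Zpow_0:
  assumes "group D"
  shows "card (subgroups_of_index (D \<times>\<times> Zpow 0) m) = card (subgroups_of_index D m)"
  using bij_betw_same_card[OF
      bij_betw_iso_subgroups_of_index[OF assms DirProd_group[OF assms group_Zpow] iso_DirProd_Zpow_0]]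
  by simp

lemma bij_betw_subgroups_of_index_DirProd_Zpow_Suc:
  assumes "group D"
  shows "bij_betw (image (\<lambda>((d, f), a). (d, f(n := a))))
    (subgroups_of_index ((D \<times>\<times> Zpow n) \<times>\<times> integer_group) m)
    (subgroups_of_index (D \<times>\<times> Zpow (Suc n)) m)"
  using assms
  by (intro bij_betw_iso_subgroups_of_index iso_DirProd_Zpow_Suc DirProd_group group_Zpow group_integer_group)

lemma finite_subgroups_of_index_DirProd_Zpow:
  assumes D: "comm_group D" "finite (carrier D)"
  shows "m > 0 \<Longrightarrow> finite (subgroups_of_index (D \<times>\<times> Zpow n) m)"
proof (induction n arbitrary: m)
  case 0
  have "group D"
    using D by (simp add: comm_group_def)
  then show ?case
    using bij_betw_iso_subgroups_of_index[OF _ DirProd_group[OF _ group_Zpow] iso_DirProd_Zpow_0]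
      finite_subgroups_of_index[OF D(2)] bij_betw_finite by blast
next
  case (Suc n)
  interpret DZ: comm_group "D \<times>\<times> Zpow n"
    using D by (simp add: comm_group_DirProd comm_group_Zpow)
  have "finite (subgroups_of_index ((D \<times>\<times> Zpow n) \<times>\<times> integer_group) m)"
    using Suc by (intro DZ.finite_subgroups_of_index_DirProd_integer_group) (auto intro: dvd_pos_nat)
  then show ?case
    using bij_betw_subgroups_of_index_DirProd_Zpow_Suc D bij_betw_finite by (blast dest: comm_group.axioms)
qed

lemma card_subgroups_of_index_DirProd_Zpow_Suc:
  assumes D: "comm_group D" "finite (carrier D)" and m: "m > 0"
  shows "card (subgroups_of_index (D \<times>\<times> Zpow (Suc n)) m) =
    (\<Sum>j | j dvd m. j * card (subgroups_of_index (D \<times>\<times> Zpow n) j))"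
proof -
  interpret DZ: comm_group "D \<times>\<times> Zpow n"
    using D by (simp add: comm_group_DirProd comm_group_Zpow)
  have "card (subgroups_of_index (D \<times>\<times> Zpow (Suc n)) m) =
      card (subgroups_of_index ((D \<times>\<times> Zpow n) \<times>\<times> integer_group) m)"
    using bij_betw_subgroups_of_index_DirProd_Zpow_Suc D by (metis bij_betw_same_card comm_group_def)
  also have "\<dots> = (\<Sum>j | j dvd m. j * card (subgroups_of_index (D \<times>\<times> Zpow n) j))"
    using m finite_subgroups_of_index_DirProd_Zpow[OF D]
    by (intro DZ.card_subgroups_of_index_DirProd_integer_group) (auto intro: dvd_pos_nat)
  finally show ?thesis .
qed

lemma card_subgroups_of_index_DirProd_Zpow:
  assumes D: "comm_group D" "finite (carrier D)" and n: "n \<ge> 1"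
  shows "m > 0 \<Longrightarrow> card (subgroups_of_index (D \<times>\<times> Zpow n) m) = chain_sum (num_subgroups_of_index D) n m"
  using n
proof (induction n arbitrary: m rule: dec_induct)
  case base
  have "group D"
    using D by (simp add: comm_group_def)
  then show ?case
    using card_subgroups_of_index_DirProd_Zpow_Suc[OF D base, of 0] chain_sum_1[OF base]
    by (simp add: card_subgroups_of_index_DirProd_Zpow_0 num_subgroups_of_index_eq_card)
next
  case (step n)
  have "card (subgroups_of_index (D \<times>\<times> Zpow (Suc n)) m) =
      (\<Sum>j | j dvd m. j * card (subgroups_of_index (D \<times>\<times> Zpow n) j))"
    by (rule card_subgroups_of_index_DirProd_Zpow_Suc[OF D step.prems])
  also have "\<dots> = (\<Sum>j | j dvd m. j * chain_sum (num_subgroups_of_index D) n j)"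
    using step.IH dvd_pos_nat[OF step.prems] by (intro sum.cong) auto
  also have "\<dots> = chain_sum (num_subgroups_of_index D) (Suc n) m"
    using chain_sum_Suc[OF step.hyps(1) step.prems] by simp
  finally show ?case .
qed

theorem proposition9p7:
  fixes D :: "('a, 'b) monoid_scheme" and n m :: nat
  assumes "comm_group D" and "finite (carrier D)" and "n \<ge> 1" and "m \<ge> 1"
  shows "num_subgroups_of_index (D \<times>\<times> Zpow n) m =
    (\<Sum>d \<in> {d \<in> {..<n} \<rightarrow>\<^sub>E {1..m}.
              (\<forall>i. Suc i < n \<longrightarrow> d i dvd d (Suc i)) \<and> d (n - 1) dvd m}.
       num_subgroups_of_index D (d 0) * (\<Prod>i<n. d i))"
  using card_subgroups_of_index_DirProd_Zpow[OF assms(1-3)] assms(4)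
  by (simp add: num_subgroups_of_index_eq_card chain_sum_def divisor_chains_def)

end
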